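(* Let $a$ be a $k$-automatic sequence, and let $b_1,\dots,b_s$ be the primitive and prolongable automatic sequences of the decomposition described in the context. For each $i$ let $\mu_i$ be the unique $T$-invariant Borel probability measure on $X_{b_i}$, viewed as a measure on $X_a$. Then every ergodic $T$-invariant Borel probability measure on $X_a$ equals $\mu_i$ for some $1\le i\le s$.
   Context: For a sequence $u$ on a finite alphabet $A$, $\mathcal L(u)$ is the set of nonempty finite factors $u(m)\cdots u(n)$ ($m\le n$), and $X_u=\{x\in A^{\mathbb Z}:\mathcal L(x)\subseteq\mathcal L(u)\}$ with the product topology and the shift $T((x(n))_n)=(x(n+1))_n$. A sequence is $k$-automatic if $a(n)=\tau(\delta(q_0,(n)_k))$ for a finite automaton ($\delta$ extended to words letter by letter, $(n)_k$ the base-$k$ expansion, most significant digit first); it is primitive and prolongable if produced by such an automaton (in some base) with $\delta(q_0,0)=q_0$ and some $\ell\ge1$ such that any two states are joined by a word of length $\ell$. Decomposition: there are sequences $b_1,\dots,b_s$, each produced by a primitive and prolongable $k^{\ell}$-DFAO for some $\ell\ge1$, such that the sets $M_i=\{m\in\mathbb N:a(mk^\lambda+r)=b_i(mk^\lambda+r)\ \forall\lambda\in\mathbb N,0\le r<k^\lambda\}$ are pairwise disjoint with positive logarithmic density and $M_0=\mathbb N\setminus\bigcup_iM_i$ has upper Banach density $0$. It is known that $X_{b_i}\subseteq X_a$ and that each $(X_{b_i},T)$ is minimal and uniquely ergodic. *)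

theory Defs
  imports "HOL-Analysis.Analysis" "HOL-Probability.Probability"
begin

fun base_digits :: "nat \<Rightarrow> nat \<Rightarrow> nat list" where
  "base_digits k n = (if k < 2 \<or> n = 0 then [] else base_digits k (n div k) @ [n mod k])"

definition delta_star :: "('q \<Rightarrow> nat \<Rightarrow> 'q) \<Rightarrow> 'q \<Rightarrow> nat list \<Rightarrow> 'q" where
  "delta_star \<delta> q w = foldl \<delta> q w"

definition is_DFAO :: "nat \<Rightarrow> 'q set \<Rightarrow> ('q \<Rightarrow> nat \<Rightarrow> 'q) \<Rightarrow> 'q \<Rightarrow> bool" where
  "is_DFAO k Q \<delta> q0 \<longleftrightarrow> k \<ge> 2 \<and> finite Q \<and> q0 \<in> Q \<and> (\<forall>q\<in>Q. \<forall>d<k. \<delta> q d \<in> Q)"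

definition generates :: "nat \<Rightarrow> ('q \<Rightarrow> nat \<Rightarrow> 'q) \<Rightarrow> 'q \<Rightarrow> ('q \<Rightarrow> 'a) \<Rightarrow> (nat \<Rightarrow> 'a) \<Rightarrow> bool" where
  "generates k \<delta> q0 \<tau> a \<longleftrightarrow> (\<forall>n. a n = \<tau> (delta_star \<delta> q0 (base_digits k n)))"

definition automatic :: "nat \<Rightarrow> (nat \<Rightarrow> 'a) \<Rightarrow> bool" where
  "automatic k a \<longleftrightarrow> (\<exists>(Q::nat set) \<delta> q0 (\<tau>::nat \<Rightarrow> 'a). is_DFAO k Q \<delta> q0 \<and> generates k \<delta> q0 \<tau> a)"

definition prim_prolong_DFAO :: "nat \<Rightarrow> 'q set \<Rightarrow> ('q \<Rightarrow> nat \<Rightarrow> 'q) \<Rightarrow> 'q \<Rightarrow> bool" where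
  "prim_prolong_DFAO k Q \<delta> q0 \<longleftrightarrow> is_DFAO k Q \<delta> q0 \<and> \<delta> q0 0 = q0 \<and>
     (\<exists>l\<ge>1. \<forall>p\<in>Q. \<forall>q\<in>Q. \<exists>w. length w = l \<and> set w \<subseteq> {..<k} \<and> delta_star \<delta> p w = q)"

definition prim_prolong_automatic :: "nat \<Rightarrow> (nat \<Rightarrow> 'a) \<Rightarrow> bool" where
  "prim_prolong_automatic K b \<longleftrightarrow>
     (\<exists>(Q::nat set) \<delta> q0 (\<tau>::nat \<Rightarrow> 'a). prim_prolong_DFAO K Q \<delta> q0 \<and> generates K \<delta> q0 \<tau> b)"

definition has_log_density :: "nat set \<Rightarrow> real \<Rightarrow> bool" where
  "has_log_density M d \<longleftrightarrow>
     ((\<lambda>N. (\<Sum>n\<in>M \<inter> {1..N}. 1 / real n) / ln (real N)) \<longlonglongrightarrow> d)"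

definition upper_banach_density :: "nat set \<Rightarrow> ereal" where
  "upper_banach_density M =
     limsup (\<lambda>N. ereal (SUP m. real (card (M \<inter> {m..<m+N})) / real N))"

definition lang :: "(nat \<Rightarrow> 'a) \<Rightarrow> 'a list set" where
  "lang u = {map u [m..<Suc n] | m n. m \<le> n}"

definition lang2 :: "(int \<Rightarrow> 'a) \<Rightarrow> 'a list set" where
  "lang2 x = {map x [m..n] | m n. m \<le> n}"

definition subshift :: "(nat \<Rightarrow> 'a) \<Rightarrow> (int \<Rightarrow> 'a) set" where
  "subshift u = {x. lang2 x \<subseteq> lang u}"

definition shift :: "(int \<Rightarrow> 'a) \<Rightarrow> (int \<Rightarrow> 'a)" where
  "shift x = (\<lambda>n. x (n + 1))"

definition invariant_prob :: "(int \<Rightarrow> 'a::discrete_topology) set \<Rightarrow> (int \<Rightarrow> 'a) measure \<Rightarrow> bool" where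
  "invariant_prob X \<mu> \<longleftrightarrow> prob_space \<mu> \<and> sets \<mu> = sets (restrict_space borel X) \<and>
     shift \<in> measurable \<mu> \<mu> \<and> distr \<mu> \<mu> shift = \<mu>"

definition ergodic_prob :: "(int \<Rightarrow> 'a::discrete_topology) set \<Rightarrow> (int \<Rightarrow> 'a) measure \<Rightarrow> bool" where
  "ergodic_prob X \<mu> \<longleftrightarrow> invariant_prob X \<mu> \<and>
     (\<forall>A\<in>sets \<mu>. shift -` A \<inter> space \<mu> = A \<longrightarrow> emeasure \<mu> A = 0 \<or> emeasure \<mu> A = 1)"

end

(*
  An ergodic measure nu on X_a gives positive mass to some X_(b i).  Outside the block indices in
  M0, which has upper Banach density zero, a agrees with some b i on whole blocks of length k^lam;
  hence in every long stretch of a at least half of the windows of length W are words of some b i,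
  and by shift invariance nu gives mass at least 1/2 to the set of such windows.  If all X_(b i)
  were null, this mass would tend to 0 as W grows.  As X_(b i) is shift invariant, ergodicity
  upgrades nu(X_(b i)) > 0 to nu(X_(b i)) = 1.

  Words occur in a primitive automatic sequence with frequencies that are uniform in the starting
  position: the counts of a word in the output blocks of length K^n read from the various states
  are pulled together, because in l steps every state reaches both a state of maximal and one of
  minimal count.  An invariant measure carried by X_(b i) gives every cylinder exactly this
  frequency, so it is unique, and nu = mu i.
*)

theory Submission
  imports Defs
begin

section \<open>Windows of one- and two-sided sequences\<close>

definition window :: "(int \<Rightarrow> 'a) \<Rightarrow> int \<Rightarrow> nat \<Rightarrow> 'a list" where
  "window x i L = map (\<lambda>t. x (i + int t)) [0..<L]"

definition nwindow :: "(nat \<Rightarrow> 'a) \<Rightarrow> nat \<Rightarrow> nat \<Rightarrow> 'a list" where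
  "nwindow u m L = map (\<lambda>t. u (m + t)) [0..<L]"

lemma length_window [simp]: "length (window x i L) = L"
  by (simp add: window_def)

lemma length_nwindow [simp]: "length (nwindow u m L) = L"
  by (simp add: nwindow_def)

lemma nth_window [simp]: "t < L \<Longrightarrow> window x i L ! t = x (i + int t)"
  by (simp add: window_def)

lemma nth_nwindow [simp]: "t < L \<Longrightarrow> nwindow u m L ! t = u (m + t)"
  by (simp add: nwindow_def)

lemma nwindow_shifted [simp]: "nwindow (\<lambda>t. u (p + t)) m L = nwindow u (p + m) L"
  by (simp add: nwindow_def add.assoc)

lemma lang_eq_nwindows: "lang u = {nwindow u m L | m L. 1 \<le> L}"
proof safe
  fix w assume "w \<in> lang u"
  then obtain m n where mn: "m \<le> n" "w = map u [m..<Suc n]" by (auto simp: lang_def)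
  then have "w = nwindow u m (Suc n - m)"
    by (intro nth_equalityI) (auto simp del: upt_Suc)
  then show "\<exists>m L. w = nwindow u m L \<and> 1 \<le> L"
    using mn(1) by (intro exI[of _ m] exI[of _ "Suc n - m"]) simp
next
  fix m L :: nat assume "1 \<le> L"
  then have "map u [m..<Suc (m + L - 1)] = nwindow u m L"
    by (intro nth_equalityI) (auto simp del: upt_Suc)
  then show "nwindow u m L \<in> lang u" unfolding lang_def
    by (intro CollectI exI[of _ m] exI[of _ "m + L - 1"]) (use \<open>1 \<le> L\<close> in auto)
qed

lemma lang2_eq_windows: "lang2 x = {window x i L | i L. 1 \<le> L}"
proof -
  have map_upto: "map x [i..j] = window x i (nat (j - i + 1))" for i j
    by (rule nth_equalityI) auto
  show ?thesis
  proof safe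
    fix w assume "w \<in> lang2 x"
    then obtain i j where "i \<le> j" "w = map x [i..j]" by (auto simp: lang2_def)
    then show "\<exists>i L. w = window x i L \<and> 1 \<le> L"
      by (intro exI[of _ i] exI[of _ "nat (j - i + 1)"]) (simp add: map_upto)
  next
    fix i :: int and L :: nat assume "1 \<le> L"
    then show "window x i L \<in> lang2 x" unfolding lang2_def
      by (intro CollectI exI[of _ i] exI[of _ "i + int L - 1"]) (auto simp: map_upto)
  qed
qed

lemma window_shift [simp]: "window (shift x) i L = window x (i + 1) L"
  by (simp add: window_def shift_def algebra_simps)

lemma window_funpow_shift [simp]: "window ((shift ^^ n) x) i L = window x (i + int n) L"
  by (induction n arbitrary: i) (simp_all add: algebra_simps)

lemma lang2_shift [simp]: "lang2 (shift x) = lang2 x"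
proof -
  have "{window x (i + 1) L | i L. 1 \<le> L} = {window x i L | i L. 1 \<le> L}"
  proof (intro equalityI subsetI)
    fix w assume "w \<in> {window x i L | i L. 1 \<le> L}"
    then obtain i L where "w = window x ((i - 1) + 1) L" "1 \<le> L" by auto
    then show "w \<in> {window x (i + 1) L | i L. 1 \<le> L}" by blast
  qed blast
  then show ?thesis by (simp add: lang2_eq_windows)
qed

lemma shift_in_subshift_iff [simp]: "shift x \<in> subshift u \<longleftrightarrow> x \<in> subshift u"
  by (simp add: subshift_def)

lemma funpow_shift_in_subshift_iff [simp]: "(shift ^^ n) x \<in> subshift u \<longleftrightarrow> x \<in> subshift u"
  by (induction n) auto

lemma window_eq_take_drop: "d + L' \<le> L \<Longrightarrow> window x (i + int d) L' = take L' (drop d (window x i L))"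
  by (rule nth_equalityI) (auto simp: algebra_simps)

lemma nwindow_eq_take_drop: "d + L' \<le> L \<Longrightarrow> nwindow u (m + d) L' = take L' (drop d (nwindow u m L))"
  by (rule nth_equalityI) (auto simp: algebra_simps)

lemma take_drop_in_lang:
  assumes "w \<in> lang u" "d + L' \<le> length w" "1 \<le> L'"
  shows "take L' (drop d w) \<in> lang u"
proof -
  obtain m where "w = nwindow u m (length w)" using assms(1) by (auto simp: lang_eq_nwindows)
  then have "take L' (drop d w) = nwindow u (m + d) L'"
    using nwindow_eq_take_drop[OF assms(2)] by metis
  then show ?thesis using assms(3) by (auto simp: lang_eq_nwindows)
qed

lemma subshift_window_eq_nwindow:
  assumes "x \<in> subshift u" "1 \<le> L"
  obtains m where "window x i L = nwindow u m L"
proof -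
  have "window x i L \<in> lang u"
    using assms by (auto simp: subshift_def lang2_eq_windows)
  then obtain m L' where "window x i L = nwindow u m L'" by (auto simp: lang_eq_nwindows)
  moreover from this have "L' = L" by (metis length_window length_nwindow)
  ultimately show ?thesis using that by blast
qed

lemma subshift_windows_eq_nwindows:
  assumes "x \<in> subshift u" "0 < N"
  obtains p where "\<And>j. j < N \<Longrightarrow> window x (int j) W = nwindow u (p + j) W"
proof -
  have "1 \<le> N + W" using assms(2) by simp
  then obtain p where p: "window x 0 (N + W) = nwindow u p (N + W)"
    by (rule subshift_window_eq_nwindow[OF assms(1)])
  have "window x (int j) W = nwindow u (p + j) W" if "j < N" for j
    using window_eq_take_drop[of j W "N + W" x 0] nwindow_eq_take_drop[of j W "N + W" u p] p that
    by simp
  then show ?thesis using that by blast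
qed

lemma subshift_values_in_range:
  assumes "x \<in> subshift u"
  shows "x t \<in> range u"
proof -
  obtain m where "window x t 1 = nwindow u m 1"
    using subshift_window_eq_nwindow[OF assms, of 1] by blast
  then have "window x t 1 ! 0 = nwindow u m 1 ! 0" by simp
  then show ?thesis by simp
qed

lemma subshift_iff_centered_windows:
  "x \<in> subshift u \<longleftrightarrow> (\<forall>n. window x (- int n) (2 * n + 1) \<in> lang u)"
proof
  assume "x \<in> subshift u"
  moreover have "window x (- int n) (2 * n + 1) \<in> lang2 x" for n
    unfolding lang2_eq_windows by force
  ultimately show "\<forall>n. window x (- int n) (2 * n + 1) \<in> lang u"
    by (auto simp: subshift_def)
next
  assume centered: "\<forall>n. window x (- int n) (2 * n + 1) \<in> lang u"
  have "window x i L \<in> lang u" if "1 \<le> L" for i L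
  proof -
    define n where "n = nat \<bar>i\<bar> + L"
    define d where "d = nat (i + int n)"
    have "i = - int n + int d" "d + L \<le> 2 * n + 1" unfolding d_def n_def by auto
    then have "window x i L = take L (drop d (window x (- int n) (2 * n + 1)))"
      by (metis window_eq_take_drop)
    also have "\<dots> \<in> lang u"
      using centered that \<open>d + L \<le> 2 * n + 1\<close> by (intro take_drop_in_lang) auto
    finally show ?thesis .
  qed
  then show "x \<in> subshift u" by (auto simp: subshift_def lang2_eq_windows)
qed

section \<open>Uniform word frequencies in primitive automatic sequences\<close>

fun padded_digits :: "nat \<Rightarrow> nat \<Rightarrow> nat \<Rightarrow> nat list" where
  "padded_digits K 0 r = []"
| "padded_digits K (Suc n) r = padded_digits K n (r div K) @ [r mod K]"

lemma length_padded_digits [simp]: "length (padded_digits K n r) = n"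
  by (induction n arbitrary: r) auto

lemma set_padded_digits: "0 < K \<Longrightarrow> set (padded_digits K n r) \<subseteq> {..<K}"
  by (induction n arbitrary: r) auto

lemma padded_digits_0: "padded_digits K n 0 = replicate n 0"
  by (induction n) (auto simp: replicate_append_same[symmetric])

lemma padded_digits_add:
  assumes "0 < K"
  shows "padded_digits K (m + n) x = padded_digits K m (x div K ^ n) @ padded_digits K n (x mod K ^ n)"
proof (induction n arbitrary: x)
  case (Suc n)
  have "x div K div K ^ n = x div K ^ Suc n" by (simp add: div_mult2_eq)
  moreover have "x div K mod K ^ n = x mod K ^ Suc n div K"
    using assms by (simp add: mod_mult2_eq)
  moreover have "x mod K = x mod K ^ Suc n mod K"
    by (simp add: mod_mod_cancel)
  ultimately show ?case using Suc by simp
qed simp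

lemma padded_digits_surj:
  assumes "set w \<subseteq> {..<K}"
  shows "\<exists>r<K ^ length w. padded_digits K (length w) r = w"
  using assms
proof (induction w rule: rev_induct)
  case (snoc d w)
  then obtain r where r: "r < K ^ length w" "padded_digits K (length w) r = w" "d < K" by auto
  then have "r * K + d < K ^ length (w @ [d])"
    using mult_le_mono1[of "Suc r" "K ^ length w" K] by (simp add: algebra_simps)
  moreover have "padded_digits K (length (w @ [d])) (r * K + d) = w @ [d]"
    using r by simp
  ultimately show ?case by blast
qed simp

lemma delta_star_Nil [simp]: "delta_star \<delta> q [] = q"
  by (simp add: delta_star_def)

lemma delta_star_append: "delta_star \<delta> q (u @ v) = delta_star \<delta> (delta_star \<delta> q u) v"
  by (simp add: delta_star_def)

lemma delta_star_snoc: "delta_star \<delta> q (u @ [d]) = \<delta> (delta_star \<delta> q u) d"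
  by (simp add: delta_star_def)

lemma delta_star_in:
  "(\<And>q d. q \<in> Q \<Longrightarrow> d < K \<Longrightarrow> \<delta> q d \<in> Q) \<Longrightarrow> q \<in> Q \<Longrightarrow> set w \<subseteq> {..<K} \<Longrightarrow>
   delta_star \<delta> q w \<in> Q"
  by (induction w arbitrary: q) (auto simp: delta_star_def)

lemma delta_star_replicate_0: "\<delta> q 0 = q \<Longrightarrow> delta_star \<delta> q (replicate n 0) = q"
  by (induction n) (auto simp: delta_star_def)

lemma base_digits_pos: "2 \<le> K \<Longrightarrow> 0 < n \<Longrightarrow> base_digits K n = base_digits K (n div K) @ [n mod K]"
  by simp

lemma base_digits_0 [simp]: "base_digits K 0 = []"
  by simp

declare base_digits.simps [simp del]

lemma set_base_digits: "2 \<le> K \<Longrightarrow> set (base_digits K n) \<subseteq> {..<K}"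
proof (induction K n rule: base_digits.induct)
  case (1 K n)
  then show ?case by (cases "n = 0") (auto simp: base_digits_pos)
qed

lemma card_Un3_le: "card (A \<union> B \<union> C) \<le> card A + card B + card C"
  using card_Un_le[of "A \<union> B" C] card_Un_le[of A B] by linarith

definition occurrences :: "(nat \<Rightarrow> 'a) \<Rightarrow> 'a list \<Rightarrow> nat \<Rightarrow> nat" where
  "occurrences u w L = card {t. t < L \<and> nwindow u t (length w) = w}"

definition occurrences_inside :: "(nat \<Rightarrow> 'a) \<Rightarrow> 'a list \<Rightarrow> nat \<Rightarrow> nat" where
  "occurrences_inside u w L = card {t. t < L \<and> t + length w \<le> L \<and> nwindow u t (length w) = w}"

lemma occurrences_inside_le: "occurrences_inside u w L \<le> L"
proof -
  have "occurrences_inside u w L \<le> card {..<L}"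
    unfolding occurrences_inside_def by (rule card_mono) auto
  then show ?thesis by simp
qed

lemma occurrences_le_inside: "occurrences u w L \<le> occurrences_inside u w L + length w"
proof -
  let ?W = "length w"
  have "{t. t < L \<and> nwindow u t ?W = w} \<subseteq>
        {t. t < L \<and> t + ?W \<le> L \<and> nwindow u t ?W = w} \<union> {L - ?W..<L}"
    by auto
  then have "occurrences u w L \<le> card ({t. t < L \<and> t + ?W \<le> L \<and> nwindow u t ?W = w} \<union> {L - ?W..<L})"
    unfolding occurrences_def by (intro card_mono) auto
  also have "\<dots> \<le> occurrences_inside u w L + card {L - ?W..<L}"
    unfolding occurrences_inside_def by (rule card_Un_le)
  finally show ?thesis by simp
qed

lemma occurrences_inside_add:
  assumes "\<And>r. r < B \<Longrightarrow> u (A + r) = v r"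
  shows "occurrences_inside u w A + occurrences_inside v w B \<le> occurrences_inside u w (A + B)"
    and "occurrences_inside u w (A + B) \<le> occurrences_inside u w A + occurrences_inside v w B + length w"
proof -
  let ?W = "length w"
  define occs where "occs f L = {t. t < L \<and> t + ?W \<le> L \<and> nwindow f t ?W = w}" for f L
  have card_occs: "card (occs f L) = occurrences_inside f w L" for f L
    by (simp add: occs_def occurrences_inside_def)
  have finite_occs: "finite (occs f L)" for f L
    by (simp add: occs_def)
  have shifted: "nwindow u (A + t) ?W = nwindow v t ?W" if "t + ?W \<le> B" for t
    by (rule nth_equalityI) (use that assms in \<open>auto simp: add.assoc\<close>)
  have right: "(+) A ` occs v B = {t \<in> occs u (A + B). A \<le> t}"
  proof (intro equalityI subsetI)
    fix t assume "t \<in> {t \<in> occs u (A + B). A \<le> t}"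
    then have "t - A \<in> occs v B" "t = A + (t - A)"
      using shifted[of "t - A"] by (auto simp: occs_def)
    then show "t \<in> (+) A ` occs v B" by blast
  qed (auto simp: occs_def shifted)
  have card_right: "card {t \<in> occs u (A + B). A \<le> t} = occurrences_inside v w B"
    unfolding right[symmetric] card_occs[symmetric] by (simp add: card_image)
  have "card (occs u A \<union> {t \<in> occs u (A + B). A \<le> t}) =
        card (occs u A) + card {t \<in> occs u (A + B). A \<le> t}"
    by (rule card_Un_disjoint) (auto simp: occs_def)
  moreover have "card (occs u A \<union> {t \<in> occs u (A + B). A \<le> t}) \<le> card (occs u (A + B))"
    by (intro card_mono finite_occs) (auto simp: occs_def)
  ultimately show "occurrences_inside u w A + occurrences_inside v w B \<le> occurrences_inside u w (A + B)"
    by (simp add: card_occs card_right)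
  have "occs u (A + B) \<subseteq> occs u A \<union> {t \<in> occs u (A + B). A \<le> t} \<union> {A - ?W..<A}"
    by (auto simp: occs_def)
  then have "occurrences_inside u w (A + B) \<le> card (occs u A \<union> {t \<in> occs u (A + B). A \<le> t} \<union> {A - ?W..<A})"
    unfolding card_occs[symmetric] by (intro card_mono) (auto simp: finite_occs)
  also have "\<dots> \<le> card (occs u A) + card {t \<in> occs u (A + B). A \<le> t} + card {A - ?W..<A}"
    by (rule card_Un3_le)
  finally show "occurrences_inside u w (A + B) \<le> occurrences_inside u w A + occurrences_inside v w B + ?W"
    unfolding card_occs card_right by simp
qed

lemma occurrences_inside_blocks:
  assumes "\<And>j r. j < R \<Longrightarrow> r < B \<Longrightarrow> u (j * B + r) = v j r"
  shows "(\<Sum>j<R. occurrences_inside (v j) w B) \<le> occurrences_inside u w (R * B) \<and>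
         occurrences_inside u w (R * B) \<le> (\<Sum>j<R. occurrences_inside (v j) w B) + R * length w"
  using assms
proof (induction R)
  case (Suc R)
  have IH: "(\<Sum>j<R. occurrences_inside (v j) w B) \<le> occurrences_inside u w (R * B) \<and>
         occurrences_inside u w (R * B) \<le> (\<Sum>j<R. occurrences_inside (v j) w B) + R * length w"
    by (rule Suc.IH) (simp add: Suc.prems)
  have block: "\<And>r. r < B \<Longrightarrow> u (R * B + r) = v R r"
    using Suc.prems by simp
  have "Suc R * B = R * B + B" by simp
  then have "occurrences_inside u w (R * B) + occurrences_inside (v R) w B \<le> occurrences_inside u w (Suc R * B)"
    "occurrences_inside u w (Suc R * B) \<le> occurrences_inside u w (R * B) + occurrences_inside (v R) w B + length w"
    using occurrences_inside_add[of B u "R * B" "v R" w, OF block] by (simp_all add: add.commute)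
  then show ?case using IH by simp
qed (simp add: occurrences_inside_def)

lemma occurrences_offset_bounds:
  assumes "s \<le> B"
  shows "occurrences_inside (\<lambda>t. u (s + t)) w L \<le> occurrences u w (B + L)"
    and "occurrences u w (B + L) \<le> B + occurrences_inside (\<lambda>t. u (s + t)) w L + length w"
proof -
  let ?W = "length w"
  define occs where "occs = {t. t < L \<and> nwindow u (s + t) ?W = w}"
  have "occurrences_inside (\<lambda>t. u (s + t)) w L =
        card ((+) s ` {t. t < L \<and> t + ?W \<le> L \<and> nwindow u (s + t) ?W = w})"
    by (simp add: occurrences_inside_def card_image)
  also have "\<dots> \<le> occurrences u w (B + L)"
    unfolding occurrences_def using assms by (intro card_mono) auto
  finally show "occurrences_inside (\<lambda>t. u (s + t)) w L \<le> occurrences u w (B + L)" .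
  have "{t. t < B + L \<and> nwindow u t ?W = w} \<subseteq> {..<s} \<union> (+) s ` occs \<union> {s + L..<B + L}"
  proof
    fix t assume t: "t \<in> {t. t < B + L \<and> nwindow u t ?W = w}"
    show "t \<in> {..<s} \<union> (+) s ` occs \<union> {s + L..<B + L}"
    proof (cases "s \<le> t \<and> t < s + L")
      case True
      then have "t - s \<in> occs" using t by (auto simp: occs_def)
      then show ?thesis using True by (auto intro!: image_eqI[of _ _ "t - s"])
    qed (use t in auto)
  qed
  then have "occurrences u w (B + L) \<le> card ({..<s} \<union> (+) s ` occs \<union> {s + L..<B + L})"
    unfolding occurrences_def by (intro card_mono) (auto simp: occs_def)
  also have "\<dots> \<le> card {..<s} + card ((+) s ` occs) + card {s + L..<B + L}"
    by (rule card_Un3_le)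
  also have "\<dots> = B + occurrences (\<lambda>t. u (s + t)) w L"
    using assms by (simp add: card_image occurrences_def occs_def)
  finally show "occurrences u w (B + L) \<le> B + occurrences_inside (\<lambda>t. u (s + t)) w L + ?W"
    using occurrences_le_inside[of "\<lambda>t. u (s + t)" w L] by linarith
qed

lemma frequency_error_bound:
  fixes x lo hi W B R :: real
  assumes "R * lo \<le> x" "x \<le> R * hi + (R + 1) * W + B"
    and "0 < B" "0 \<le> R" "lo \<le> hi" "0 \<le> W"
  shows "\<bar>x / ((R + 1) * B) - R * lo / ((R + 1) * B)\<bar> \<le> (hi - lo) / B + W / B + 1 / (R + 1)"
proof -
  have N: "0 < (R + 1) * B" using assms by simp
  have "x / ((R + 1) * B) - R * lo / ((R + 1) * B) = (x - R * lo) / ((R + 1) * B)"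
    by (simp add: diff_divide_distrib)
  moreover have "0 \<le> (x - R * lo) / ((R + 1) * B)"
    using assms(1) N by simp
  moreover have "(x - R * lo) / ((R + 1) * B) \<le> (R * (hi - lo) + (R + 1) * W + B) / ((R + 1) * B)"
    using assms(2) N by (intro divide_right_mono) (auto simp: algebra_simps)
  moreover have "(R * (hi - lo) + (R + 1) * W + B) / ((R + 1) * B) = R / (R + 1) * ((hi - lo) / B) + W / B + 1 / (R + 1)"
  proof -
    have "R * (hi - lo) / ((R + 1) * B) = R / (R + 1) * ((hi - lo) / B)"
      by (simp only: times_divide_times_eq)
    moreover have "R + 1 \<noteq> 0" "B \<noteq> 0" using assms(3,4) by simp_all
    then have "(R + 1) * W / ((R + 1) * B) = W / B" "B / ((R + 1) * B) = 1 / (R + 1)"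
      by simp_all
    ultimately show ?thesis by (simp only: add_divide_distrib)
  qed
  moreover have "R / (R + 1) * ((hi - lo) / B) \<le> (hi - lo) / B"
    using assms(3-5) by (intro mult_left_le_one_le) auto
  ultimately show ?thesis by linarith
qed

locale primitive_prolongable_dfao =
  fixes K :: nat and Q :: "nat set" and \<delta> :: "nat \<Rightarrow> nat \<Rightarrow> nat" and q0 :: nat
    and \<tau> :: "nat \<Rightarrow> 'a" and b :: "nat \<Rightarrow> 'a" and l :: nat
  assumes base_ge_2: "2 \<le> K"
    and finite_Q: "finite Q"
    and q0_in_Q: "q0 \<in> Q"
    and \<delta>_in_Q: "\<And>q d. q \<in> Q \<Longrightarrow> d < K \<Longrightarrow> \<delta> q d \<in> Q"
    and prolongable: "\<delta> q0 0 = q0"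
    and l_pos: "1 \<le> l"
    and primitive: "\<And>p q. p \<in> Q \<Longrightarrow> q \<in> Q \<Longrightarrow>
      \<exists>v. length v = l \<and> set v \<subseteq> {..<K} \<and> delta_star \<delta> p v = q"
    and b_eq: "\<And>n. b n = \<tau> (delta_star \<delta> q0 (base_digits K n))"
begin

definition state :: "nat \<Rightarrow> nat" where
  "state n = delta_star \<delta> q0 (base_digits K n)"

definition block_letter :: "nat \<Rightarrow> nat \<Rightarrow> nat \<Rightarrow> 'a" where
  "block_letter q n r = \<tau> (delta_star \<delta> q (padded_digits K n r))"

lemma base_pos: "0 < K"
  using base_ge_2 by simp

lemma state_in_Q: "state m \<in> Q"
  unfolding state_def using delta_star_in[OF \<delta>_in_Q q0_in_Q set_base_digits[OF base_ge_2]] .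

lemma delta_star_padded_digits_in_Q: "q \<in> Q \<Longrightarrow> delta_star \<delta> q (padded_digits K n r) \<in> Q"
  by (rule delta_star_in[of Q K \<delta>]) (use \<delta>_in_Q set_padded_digits[OF base_pos] in auto)

lemma state_mult_add:
  "r < K ^ n \<Longrightarrow> state (m * K ^ n + r) = delta_star \<delta> (state m) (padded_digits K n r)"
proof (induction n arbitrary: r)
  case (Suc n)
  let ?x = "m * K ^ Suc n + r"
  show ?case
  proof (cases "?x = 0")
    case True
    then have "m = 0" "r = 0" using base_pos by auto
    then show ?thesis
      using delta_star_replicate_0[of \<delta> q0 "Suc n", OF prolongable] by (simp add: state_def padded_digits_0)
  next
    case False
    have x: "?x = r + (m * K ^ n) * K" by (simp add: algebra_simps)
    have "?x div K = m * K ^ n + r div K" "?x mod K = r mod K"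
      unfolding x using base_pos by simp_all
    moreover have "r div K < K ^ n"
      using Suc.prems base_pos by (simp add: div_less_iff_less_mult mult.commute)
    ultimately have "state ?x = \<delta> (delta_star \<delta> (state m) (padded_digits K n (r div K))) (r mod K)"
      using False base_ge_2 Suc.IH by (simp add: state_def base_digits_pos delta_star_snoc)
    then show ?thesis by (simp add: delta_star_snoc)
  qed
qed simp

lemma b_mult_add: "r < K ^ n \<Longrightarrow> b (m * K ^ n + r) = block_letter (state m) n r"
  by (simp add: b_eq state_mult_add block_letter_def flip: state_def)

definition block_count :: "'a list \<Rightarrow> nat \<Rightarrow> nat \<Rightarrow> nat" where
  "block_count w n q = occurrences_inside (block_letter q n) w (K ^ n)"

lemma block_count_split:
  "(\<Sum>j<K ^ m. block_count w n (delta_star \<delta> q (padded_digits K m j))) \<le> block_count w (m + n) q \<and>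
   block_count w (m + n) q \<le>
     (\<Sum>j<K ^ m. block_count w n (delta_star \<delta> q (padded_digits K m j))) + K ^ m * length w"
proof -
  have "block_letter q (m + n) (j * K ^ n + r) = block_letter (delta_star \<delta> q (padded_digits K m j)) n r"
    if "r < K ^ n" for j r
  proof -
    have "(j * K ^ n + r) div K ^ n = j" "(j * K ^ n + r) mod K ^ n = r"
      using that base_pos by simp_all
    then have "padded_digits K (m + n) (j * K ^ n + r) = padded_digits K m j @ padded_digits K n r"
      using padded_digits_add[OF base_pos, of m n "j * K ^ n + r"] by simp
    then show ?thesis by (simp add: block_letter_def delta_star_append)
  qed
  from occurrences_inside_blocks[where u = "block_letter q (m + n)"
      and v = "\<lambda>j. block_letter (delta_star \<delta> q (padded_digits K m j)) n", OF this]
  show ?thesis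
    unfolding block_count_def power_add .
qed

definition max_count :: "'a list \<Rightarrow> nat \<Rightarrow> nat" where
  "max_count w n = Max (block_count w n ` Q)"

definition min_count :: "'a list \<Rightarrow> nat \<Rightarrow> nat" where
  "min_count w n = Min (block_count w n ` Q)"

lemma block_count_le_max: "q \<in> Q \<Longrightarrow> block_count w n q \<le> max_count w n"
  unfolding max_count_def using finite_Q by auto

lemma min_le_block_count: "q \<in> Q \<Longrightarrow> min_count w n \<le> block_count w n q"
  unfolding min_count_def using finite_Q by auto

lemma max_count_attained: "\<exists>q\<in>Q. block_count w n q = max_count w n"
  unfolding max_count_def using Max_in[of "block_count w n ` Q"] finite_Q q0_in_Q by fastforce

lemma min_count_attained: "\<exists>q\<in>Q. block_count w n q = min_count w n"
  unfolding min_count_def using Min_in[of "block_count w n ` Q"] finite_Q q0_in_Q by fastforce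

lemma max_count_le: "max_count w n \<le> K ^ n"
  using max_count_attained[of w n] occurrences_inside_le by (metis block_count_def)

lemma min_le_max_count: "min_count w n \<le> max_count w n"
  using min_le_block_count[OF q0_in_Q] block_count_le_max[OF q0_in_Q] order_trans by blast

lemma reach_in_l_steps: "p \<in> Q \<Longrightarrow> q \<in> Q \<Longrightarrow> \<exists>j<K ^ l. delta_star \<delta> p (padded_digits K l j) = q"
  using primitive padded_digits_surj by metis

lemma sum_successor_counts_le:
  assumes "q \<in> Q"
  shows "(\<Sum>j<K ^ l. block_count w n (delta_star \<delta> q (padded_digits K l j))) \<le>
    min_count w n + (K ^ l - 1) * max_count w n"
proof -
  obtain p where p: "p \<in> Q" "block_count w n p = min_count w n" using min_count_attained by blast
  obtain j0 where j0: "j0 < K ^ l" "delta_star \<delta> q (padded_digits K l j0) = p"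
    using reach_in_l_steps[OF assms p(1)] by blast
  let ?f = "\<lambda>j. block_count w n (delta_star \<delta> q (padded_digits K l j))"
  have "(\<Sum>j<K ^ l. ?f j) = ?f j0 + (\<Sum>j\<in>{..<K ^ l} - {j0}. ?f j)"
    using j0 by (simp add: sum.remove)
  also have "(\<Sum>j\<in>{..<K ^ l} - {j0}. ?f j) \<le> (\<Sum>j\<in>{..<K ^ l} - {j0}. max_count w n)"
    by (intro sum_mono block_count_le_max delta_star_padded_digits_in_Q assms)
  finally show ?thesis using j0 p by simp
qed

lemma sum_successor_counts_ge:
  assumes "q \<in> Q"
  shows "max_count w n + (K ^ l - 1) * min_count w n \<le>
    (\<Sum>j<K ^ l. block_count w n (delta_star \<delta> q (padded_digits K l j)))"
proof -
  obtain p where p: "p \<in> Q" "block_count w n p = max_count w n" using max_count_attained by blast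
  obtain j0 where j0: "j0 < K ^ l" "delta_star \<delta> q (padded_digits K l j0) = p"
    using reach_in_l_steps[OF assms p(1)] by blast
  let ?f = "\<lambda>j. block_count w n (delta_star \<delta> q (padded_digits K l j))"
  have "(K ^ l - 1) * min_count w n = (\<Sum>j\<in>{..<K ^ l} - {j0}. min_count w n)"
    using j0 by simp
  also have "\<dots> \<le> (\<Sum>j\<in>{..<K ^ l} - {j0}. ?f j)"
    by (intro sum_mono min_le_block_count delta_star_padded_digits_in_Q assms)
  finally have "max_count w n + (K ^ l - 1) * min_count w n \<le> ?f j0 + (\<Sum>j\<in>{..<K ^ l} - {j0}. ?f j)"
    using j0 p by simp
  also have "\<dots> = (\<Sum>j<K ^ l. ?f j)"
    using j0 by (simp add: sum.remove)
  finally show ?thesis .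
qed

(* A level l + n count is the sum of the level n counts of the K^l successor states
   (block_count_split), and by primitivity these successors include a state of minimal and one of
   maximal level n count. *)

lemma count_gap_step:
  "real (max_count w (l + n)) - real (min_count w (l + n))
     \<le> (real (K ^ l) - 2) * (real (max_count w n) - real (min_count w n)) + real (K ^ l) * real (length w)"
proof -
  obtain qa where qa: "qa \<in> Q" "block_count w (l + n) qa = max_count w (l + n)"
    using max_count_attained by blast
  obtain qb where qb: "qb \<in> Q" "block_count w (l + n) qb = min_count w (l + n)"
    using min_count_attained by blast
  have upper: "max_count w (l + n) \<le> min_count w n + (K ^ l - 1) * max_count w n + K ^ l * length w"
    using block_count_split[where m = l and q = qa and w = w and n = n]
      sum_successor_counts_le[OF qa(1), of w n] qa(2) by linarith
  have lower: "max_count w n + (K ^ l - 1) * min_count w n \<le> min_count w (l + n)"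
    using block_count_split[where m = l and q = qb and w = w and n = n]
      sum_successor_counts_ge[OF qb(1), of w n] qb(2) by linarith
  have diff: "real (K ^ l - 1) = real (K ^ l) - 1"
    using base_pos by (simp add: of_nat_diff)
  have "real (max_count w (l + n)) \<le> real (min_count w n + (K ^ l - 1) * max_count w n + K ^ l * length w)"
    using upper by (simp only: of_nat_le_iff)
  moreover have "real (max_count w n + (K ^ l - 1) * min_count w n) \<le> real (min_count w (l + n))"
    using lower by (simp only: of_nat_le_iff)
  ultimately show ?thesis
    unfolding of_nat_add of_nat_mult diff by (simp add: algebra_simps)
qed

definition spread :: "'a list \<Rightarrow> nat \<Rightarrow> real" where
  "spread w n = (real (max_count w n) - real (min_count w n)) / real (K ^ n)"

definition contraction :: real where
  "contraction = (real (K ^ l) - 2) / real (K ^ l)"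

lemma power_l_ge_2: "2 \<le> real (K ^ l)"
proof -
  have "K ^ 1 \<le> K ^ l" using l_pos base_pos by (intro power_increasing) auto
  then have "real 2 \<le> real (K ^ l)" using base_ge_2 by (simp only: of_nat_le_iff) simp
  then show ?thesis by simp
qed

lemma spread_le_1: "spread w n \<le> 1"
proof -
  have "real (max_count w n) \<le> real (K ^ n)" using max_count_le by (simp only: of_nat_le_iff)
  then have "real (max_count w n) - real (min_count w n) \<le> real (K ^ n)" by linarith
  then show ?thesis using base_pos by (simp only: spread_def divide_le_eq_1_pos) simp
qed

lemma contraction_bounds: "0 \<le> contraction" "contraction < 1" "contraction + 2 / real (K ^ l) = 1"
proof -
  define D where "D = real (K ^ l)"
  have "2 \<le> D" using power_l_ge_2 by (simp add: D_def)
  then show "0 \<le> contraction" "contraction < 1" "contraction + 2 / real (K ^ l) = 1"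
    unfolding contraction_def D_def[symmetric] by (simp_all add: field_simps)
qed

lemma spread_step: "spread w (l + n) \<le> contraction * spread w n + real (length w) / real (K ^ n)"
proof -
  define D where "D = real (K ^ l)"
  define B where "B = real (K ^ n)"
  have pos: "0 < D" "0 < B" using power_l_ge_2 base_pos by (auto simp: D_def B_def)
  have "spread w (l + n) = (real (max_count w (l + n)) - real (min_count w (l + n))) / (D * B)"
    by (simp add: spread_def D_def B_def power_add)
  also have "\<dots> \<le> ((D - 2) * (real (max_count w n) - real (min_count w n)) + D * real (length w)) / (D * B)"
    using count_gap_step[of w n] pos unfolding D_def[symmetric] by (intro divide_right_mono) auto
  also have "\<dots> = contraction * spread w n + real (length w) / B"
    unfolding contraction_def spread_def D_def[symmetric] B_def[symmetric] using pos by (simp add: field_simps)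
  finally show ?thesis unfolding B_def .
qed

lemma spread_iterate:
  "spread w (n0 + i * l) \<le> contraction ^ i + real (length w) * real (K ^ l) / (2 * real (K ^ n0))"
proof (induction i)
  case 0
  have "0 \<le> real (length w) * real (K ^ l) / (2 * real (K ^ n0))" by simp
  with spread_le_1[of w n0] show ?case by (simp only: power_0 mult_0 add_0_right)
next
  case (Suc i)
  define E where "E = real (length w) * real (K ^ l) / (2 * real (K ^ n0))"
  have "real (length w) / real (K ^ (n0 + i * l)) \<le> real (length w) / real (K ^ n0)"
    using base_pos by (intro divide_left_mono) (auto intro: power_increasing)
  also have "\<dots> = 2 / real (K ^ l) * E"
    using base_pos by (simp add: E_def)
  finally have "spread w (l + (n0 + i * l)) \<le> contraction * spread w (n0 + i * l) + 2 / real (K ^ l) * E"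
    using spread_step[of w "n0 + i * l"] by linarith
  also have "\<dots> \<le> contraction * (contraction ^ i + E) + 2 / real (K ^ l) * E"
    using Suc.IH contraction_bounds(1) unfolding E_def by (intro add_right_mono mult_left_mono) auto
  also have "\<dots> = contraction ^ Suc i + (contraction + 2 / real (K ^ l)) * E"
    by (simp add: algebra_simps)
  also have "\<dots> = contraction ^ Suc i + E"
    using contraction_bounds(3) by simp
  finally show ?case by (simp add: E_def algebra_simps)
qed

lemma spread_eventually_small:
  assumes "0 < e"
  obtains n where "spread w n \<le> e" "real (length w) / real (K ^ n) \<le> e"
proof -
  define W where "W = real (length w)"
  define D where "D = real (K ^ l)"
  have "1 < real K" using base_ge_2 by simp
  then obtain n0 where n0: "2 * (W * D + W) / e < real K ^ n0"
    using real_arch_pow by blast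
  define B where "B = real (K ^ n0)"
  have B_pos: "0 < B" using base_pos by (simp add: B_def)
  have bound: "2 * (W * D + W) < e * B" using n0 assms by (simp add: B_def divide_less_eq mult.commute)
  then have bound': "2 * (W * D) + 2 * W < e * B" by (simp only: distrib_left)
  have "0 \<le> W" "2 \<le> D" using power_l_ge_2 by (auto simp: W_def D_def)
  then have "0 \<le> W * D" by simp
  then have "W * D \<le> e * B" "W \<le> e * B" using bound' \<open>0 \<le> W\<close> by linarith+
  then have small: "W * D / (2 * B) \<le> e / 2" "W / B \<le> e"
    using B_pos by (simp_all add: field_simps)
  obtain i where i: "contraction ^ i < e / 2"
    using real_arch_pow_inv[of "e / 2" contraction] contraction_bounds assms by auto
  define n where "n = n0 + i * l"
  have "spread w n \<le> e"
    using spread_iterate[of w n0 i] small(1) i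
    unfolding n_def W_def[symmetric] D_def[symmetric] B_def[symmetric] by linarith
  moreover have "W / real (K ^ n) \<le> W / B"
    using base_pos by (auto simp: W_def B_def n_def intro!: divide_left_mono power_increasing)
  ultimately show ?thesis using that small(2) unfolding W_def by fastforce
qed

lemma occurrences_window_bounds:
  "R * min_count w n \<le> occurrences (\<lambda>t. b (p + t)) w ((R + 1) * K ^ n)"
  "occurrences (\<lambda>t. b (p + t)) w ((R + 1) * K ^ n) \<le> R * max_count w n + (R + 1) * length w + K ^ n"
proof -
  \<comment> \<open>The window starts at most one block before the complete block with index \<open>m0\<close>
     and contains the \<open>R\<close> complete blocks \<open>m0, \<dots>, m0 + R - 1\<close>.\<close>
  define B where "B = K ^ n"
  define m0 where "m0 = p div B + 1"
  define s where "s = m0 * B - p"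
  have B_pos: "0 < B" using base_pos by (simp add: B_def)
  have "p div B * B + p mod B = p" "p mod B < B" "m0 * B = p div B * B + B"
    using B_pos by (simp_all add: m0_def)
  then have "p \<le> m0 * B" "m0 * B \<le> p + B" by linarith+
  then have s: "p + s = m0 * B" "s \<le> B"
    unfolding s_def by arith+
  have "b (p + (s + (j * B + r))) = block_letter (state (m0 + j)) n r" if "r < B" for j r
  proof -
    have "p + (s + (j * B + r)) = (m0 + j) * K ^ n + r"
      using s(1) by (simp add: B_def algebra_simps)
    then show ?thesis using b_mult_add that unfolding B_def by presburger
  qed
  then have blocks: "(\<Sum>j<R. block_count w n (state (m0 + j))) \<le> occurrences_inside (\<lambda>t. b (p + (s + t))) w (R * B) \<and>
      occurrences_inside (\<lambda>t. b (p + (s + t))) w (R * B) \<le> (\<Sum>j<R. block_count w n (state (m0 + j))) + R * length w"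
    using occurrences_inside_blocks[where u = "\<lambda>t. b (p + (s + t))" and v = "\<lambda>j. block_letter (state (m0 + j)) n"]
    by (simp add: block_count_def B_def)
  have "(\<Sum>j<R. min_count w n) \<le> (\<Sum>j<R. block_count w n (state (m0 + j)))"
    by (intro sum_mono min_le_block_count state_in_Q)
  moreover have "(\<Sum>j<R. block_count w n (state (m0 + j))) \<le> (\<Sum>j<R. max_count w n)"
    by (intro sum_mono block_count_le_max state_in_Q)
  moreover have "B + R * B = (R + 1) * B" by simp
  ultimately show "R * min_count w n \<le> occurrences (\<lambda>t. b (p + t)) w ((R + 1) * K ^ n)"
    "occurrences (\<lambda>t. b (p + t)) w ((R + 1) * K ^ n) \<le> R * max_count w n + (R + 1) * length w + K ^ n"
    using blocks occurrences_offset_bounds[OF s(2), of "\<lambda>t. b (p + t)" w "R * B"]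
    by (simp_all add: B_def algebra_simps)
qed

lemma uniform_word_frequency:
  assumes "0 < e"
  shows "\<exists>N>0. \<exists>c. \<forall>p. \<bar>real (occurrences (\<lambda>t. b (p + t)) w N) / real N - c\<bar> \<le> e"
proof -
  obtain n where n: "spread w n \<le> e / 3" "real (length w) / real (K ^ n) \<le> e / 3"
    using spread_eventually_small[of "e / 3" w] assms by auto
  obtain R :: nat where R: "3 / e < real R"
    using reals_Archimedean2 by blast
  have "1 / (real R + 1) \<le> e / 3"
    using R assms by (simp add: field_simps)
  define N where "N = (R + 1) * K ^ n"
  have "\<bar>real (occurrences (\<lambda>t. b (p + t)) w N) / real N - real R * real (min_count w n) / real N\<bar> \<le> e" for p
  proof -
    define x where "x = occurrences (\<lambda>t. b (p + t)) w N"
    have "R * min_count w n \<le> x" "x \<le> R * max_count w n + (R + 1) * length w + K ^ n"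
      using occurrences_window_bounds[where R = R and w = w and n = n and p = p] by (simp_all add: x_def N_def)
    then have "real (R * min_count w n) \<le> real x"
      "real x \<le> real (R * max_count w n + (R + 1) * length w + K ^ n)"
      by (simp_all only: of_nat_le_iff)
    then have "real R * real (min_count w n) \<le> real x"
      "real x \<le> real R * real (max_count w n) + (real R + 1) * real (length w) + real (K ^ n)"
      by (simp_all add: algebra_simps)
    then have "\<bar>real x / ((real R + 1) * real (K ^ n)) - real R * real (min_count w n) / ((real R + 1) * real (K ^ n))\<bar>
          \<le> spread w n + real (length w) / real (K ^ n) + 1 / (real R + 1)"
      unfolding spread_def using min_le_max_count[of w n] base_pos
      by (intro frequency_error_bound) simp_all
    moreover have "real N = (real R + 1) * real (K ^ n)" by (simp add: N_def algebra_simps)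
    ultimately have "\<bar>real (occurrences (\<lambda>t. b (p + t)) w N) / real N - real R * real (min_count w n) / real N\<bar>
          \<le> spread w n + real (length w) / real (K ^ n) + 1 / (real R + 1)"
      unfolding x_def by (simp only:)
    then show ?thesis
      using n \<open>1 / (real R + 1) \<le> e / 3\<close> by linarith
  qed
  moreover have "0 < N" using base_pos by (simp add: N_def)
  ultimately show ?thesis by blast
qed

end

lemma prim_prolong_automatic_uniform_frequency:
  assumes "prim_prolong_automatic K b" "0 < e"
  shows "\<exists>N>0. \<exists>c. \<forall>p. \<bar>real (occurrences (\<lambda>t. b (p + t)) w N) / real N - c\<bar> \<le> e"
proof -
  obtain Q :: "nat set" and \<delta> q0 and \<tau> :: "nat \<Rightarrow> 'a" and l
    where "prim_prolong_DFAO K Q \<delta> q0" "generates K \<delta> q0 \<tau> b"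
      and "1 \<le> l" "\<forall>p\<in>Q. \<forall>q\<in>Q. \<exists>v. length v = l \<and> set v \<subseteq> {..<K} \<and> delta_star \<delta> p v = q"
    using assms(1) unfolding prim_prolong_automatic_def prim_prolong_DFAO_def by blast
  then interpret primitive_prolongable_dfao K Q \<delta> q0 \<tau> b l
    by unfold_locales (auto simp: prim_prolong_DFAO_def is_DFAO_def generates_def)
  show ?thesis by (rule uniform_word_frequency[OF assms(2)])
qed

section \<open>Cylinders and shift-invariant measures\<close>

lemma open_window_set: "open {x :: int \<Rightarrow> 'a::discrete_topology. P (window x i L)}"
proof -
  have coord: "open {x :: int \<Rightarrow> 'a. x j = c}" for j c
  proof -
    have "{x :: int \<Rightarrow> 'a. x j = c} = (\<lambda>x. x j) -` {c}" by auto
    also have "open \<dots>"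
      by (intro open_vimage discrete_topology_class.open_discrete continuous_on_product_coordinates)
    finally show ?thesis .
  qed
  have "{x :: int \<Rightarrow> 'a. P (window x i L)} =
        (\<Union>w\<in>{w. P w \<and> length w = L}. \<Inter>t\<in>{..<L}. {x. x (i + int t) = w ! t})"
  proof (intro equalityI subsetI)
    fix x :: "int \<Rightarrow> 'a" assume "x \<in> {x. P (window x i L)}"
    then show "x \<in> (\<Union>w\<in>{w. P w \<and> length w = L}. \<Inter>t\<in>{..<L}. {x. x (i + int t) = w ! t})"
      by (intro UN_I[of "window x i L"]) auto
  next
    fix x :: "int \<Rightarrow> 'a"
    assume "x \<in> (\<Union>w\<in>{w. P w \<and> length w = L}. \<Inter>t\<in>{..<L}. {x. x (i + int t) = w ! t})"
    then obtain w where w: "P w" "length w = L" "\<forall>t<L. x (i + int t) = w ! t" by auto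
    have "window x i L = w" by (rule nth_equalityI) (use w in auto)
    then show "x \<in> {x. P (window x i L)}" using w by simp
  qed
  also have "open \<dots>"
    by (intro open_UN ballI open_INT finite_lessThan coord)
  finally show ?thesis .
qed

lemma window_set_in_sets:
  "X \<inter> {x :: int \<Rightarrow> 'a::discrete_topology. P (window x i L)} \<in> sets (restrict_space borel X)"
  unfolding sets_restrict_space using borel_open[OF open_window_set] by blast

lemma subshift_in_sets:
  "X \<inter> subshift u \<in> sets (restrict_space borel (X :: (int \<Rightarrow> 'a::discrete_topology) set))"
proof -
  have "X \<inter> subshift u = (\<Inter>n. X \<inter> {x. window x (- int n) (2 * n + 1) \<in> lang u})"
    using subshift_iff_centered_windows by blast
  also have "\<dots> \<in> sets (restrict_space borel X)"
    by (intro sets.countable_INT image_subsetI window_set_in_sets) auto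
  finally show ?thesis .
qed

lemma open_contains_centered_cylinder:
  fixes U :: "(int \<Rightarrow> 'a::discrete_topology) set"
  assumes "open U" "x \<in> U"
  obtains n where "\<And>y. window y (- int n) (2 * n + 1) = window x (- int n) (2 * n + 1) \<Longrightarrow> y \<in> U"
proof -
  have "openin (product_topology (\<lambda>i. euclidean) UNIV) U"
    using assms(1) by (simp add: euclidean_product_topology)
  from product_topology_open_contains_basis[OF this assms(2)]
  obtain V where V: "x \<in> (\<Pi>\<^sub>E i\<in>UNIV. V i)" "finite {i. V i \<noteq> topspace euclidean}"
    "(\<Pi>\<^sub>E i\<in>UNIV. V i) \<subseteq> U" by blast
  define J where "J = {i. V i \<noteq> UNIV}"
  define n where "n = Max (insert 0 ((\<lambda>i. nat \<bar>i\<bar>) ` J))"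
  have n: "nat \<bar>i\<bar> \<le> n" if "i \<in> J" for i
    unfolding n_def using V(2) that by (intro Max_ge) (auto simp: J_def)
  have "y \<in> U" if y: "window y (- int n) (2 * n + 1) = window x (- int n) (2 * n + 1)" for y
  proof -
    have "y i \<in> V i" for i
    proof (cases "i \<in> J")
      case True
      define t where "t = nat (i + int n)"
      have t: "t < 2 * n + 1" "- int n + int t = i" using n[OF True] by (auto simp: t_def)
      have "y i = window y (- int n) (2 * n + 1) ! t" using t by simp
      also have "\<dots> = x i" unfolding y using t by simp
      finally show ?thesis using V(1) by auto
    qed (auto simp: J_def)
    then show ?thesis using V(3) by blast
  qed
  then show ?thesis using that by blast
qed

definition cylinder :: "(int \<Rightarrow> 'a) set \<Rightarrow> nat \<Rightarrow> 'a list \<Rightarrow> (int \<Rightarrow> 'a) set" where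
  "cylinder X n w = X \<inter> {x. window x (- int n) (2 * n + 1) = w}"

definition cylinders :: "(int \<Rightarrow> 'a) set \<Rightarrow> (int \<Rightarrow> 'a) set set" where
  "cylinders X = range (\<lambda>(n, w). cylinder X n w) \<union> {X, {}}"

lemma cylinder_Int:
  assumes "n \<le> n'"
  shows "cylinder X n w \<inter> cylinder X n' w' =
    (if take (2 * n + 1) (drop (n' - n) w') = w then cylinder X n' w' else {})"
proof -
  have "window x (- int n) (2 * n + 1) =
    take (2 * n + 1) (drop (n' - n) (window x (- int n') (2 * n' + 1)))" for x :: "int \<Rightarrow> 'a"
    using assms window_eq_take_drop[of "n' - n" "2 * n + 1" "2 * n' + 1" x "- int n'"] by simp
  then show ?thesis unfolding cylinder_def by auto
qed

lemma cylinder_in_cylinders: "cylinder X n w \<in> cylinders X"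
  unfolding cylinders_def by (rule UnI1, rule range_eqI[where x = "(n, w)"]) simp

lemma Int_stable_cylinders: "Int_stable (cylinders X)"
proof (unfold Int_stable_def, intro ballI)
  fix A B assume A: "A \<in> cylinders X" and B: "B \<in> cylinders X"
  have empty: "{} \<in> cylinders X" by (simp add: cylinders_def)
  have cylinder_Int_in: "cylinder X n w \<inter> cylinder X n' w' \<in> cylinders X" for n w n' w'
  proof (cases "n \<le> n'")
    case True
    then show ?thesis using empty by (simp add: cylinder_Int cylinder_in_cylinders)
  next
    case False
    then have "cylinder X n' w' \<inter> cylinder X n w \<in> cylinders X"
      using empty by (simp add: cylinder_Int cylinder_in_cylinders)
    then show ?thesis by (simp only: Int_commute)
  qed
  consider "A = X \<or> A = {} \<or> B = X \<or> B = {}" | n w n' w' where "A = cylinder X n w" "B = cylinder X n' w'"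
    using A B unfolding cylinders_def by auto
  then show "A \<inter> B \<in> cylinders X"
  proof cases
    case 1
    have AX: "A \<subseteq> X" "B \<subseteq> X" using A B by (auto simp: cylinders_def cylinder_def)
    from 1 show ?thesis
    proof (elim disjE)
      assume "A = X"
      with AX(2) B show ?thesis by (simp add: Int_absorb1)
    next
      assume "B = X"
      with AX(1) A show ?thesis by (simp add: Int_absorb2)
    qed (use empty in simp_all)
  next
    case 2
    then show ?thesis using cylinder_Int_in by simp
  qed
qed

lemma cylinders_subset_sets:
  "cylinders X \<subseteq> sets (restrict_space borel (X :: (int \<Rightarrow> 'a::discrete_topology) set))"
  using window_set_in_sets[of X] sets.top[of "restrict_space borel X"]
  by (auto simp: cylinders_def cylinder_def space_restrict_space)

lemma open_in_sigma_cylinders: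
  fixes U :: "(int \<Rightarrow> 'a::discrete_topology) set"
  assumes "open U"
  shows "subshift a \<inter> U \<in> sigma_sets (subshift a) (cylinders (subshift a))"
proof -
  \<comment> \<open>\<open>'a\<close> may be uncountable, but the points of \<open>subshift a\<close> take values in \<open>range a\<close>.\<close>
  define X where "X = subshift a"
  define I where "I = {(n, w). w \<in> lists (range a) \<and> cylinder X n w \<subseteq> U}"
  have "countable I"
  proof (rule countable_subset)
    show "I \<subseteq> UNIV \<times> lists (range a)" by (auto simp: I_def)
    show "countable (UNIV \<times> lists (range a) :: (nat \<times> 'a list) set)" by simp
  qed
  have "X \<inter> U = \<Union> ((\<lambda>(n, w). cylinder X n w) ` I)"
  proof (intro equalityI subsetI)
    fix x assume x: "x \<in> X \<inter> U"
    then obtain n where n: "\<And>y. window y (- int n) (2 * n + 1) = window x (- int n) (2 * n + 1) \<Longrightarrow> y \<in> U"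
      using open_contains_centered_cylinder[OF assms] by blast
    have "window x (- int n) (2 * n + 1) \<in> lists (range a)"
      using x subshift_values_in_range by (auto simp: X_def window_def)
    then have "(n, window x (- int n) (2 * n + 1)) \<in> I"
      using n by (auto simp: I_def cylinder_def)
    moreover have "x \<in> cylinder X n (window x (- int n) (2 * n + 1))"
      using x by (simp add: cylinder_def)
    ultimately show "x \<in> \<Union> ((\<lambda>(n, w). cylinder X n w) ` I)" by blast
  qed (auto simp: I_def cylinder_def)
  also have "\<dots> \<in> sigma_sets X (cylinders X)"
  proof (rule sigma_sets_UNION)
    show "countable ((\<lambda>(n, w). cylinder X n w) ` I)" using \<open>countable I\<close> by simp
  qed (auto intro: sigma_sets.Basic cylinder_in_cylinders)
  finally show ?thesis unfolding X_def .
qed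

lemma sigma_sets_cylinders:
  "sigma_sets (subshift a) (cylinders (subshift a)) =
   sets (restrict_space borel (subshift a :: (int \<Rightarrow> 'a::discrete_topology) set))"
proof
  let ?X = "subshift a :: (int \<Rightarrow> 'a) set"
  show "sigma_sets ?X (cylinders ?X) \<subseteq> sets (restrict_space borel ?X)"
    using sets.sigma_sets_subset[OF cylinders_subset_sets[of ?X]] by (simp add: space_restrict_space)
  show "sets (restrict_space borel ?X) \<subseteq> sigma_sets ?X (cylinders ?X)"
  proof
    fix A assume "A \<in> sets (restrict_space borel ?X)"
    then obtain B where B: "B \<in> sigma_sets UNIV {S. open S}" "A = ?X \<inter> B"
      unfolding sets_restrict_space sets_borel by auto
    from B(1) have "?X \<inter> B \<in> sigma_sets ?X (cylinders ?X)"
    proof (induction rule: sigma_sets.induct)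
      case (Basic U)
      then show ?case using open_in_sigma_cylinders by blast
    next
      case Empty
      then show ?case by (simp add: sigma_sets.Empty)
    next
      case (Compl U)
      have "?X \<inter> (UNIV - U) = ?X - (?X \<inter> U)" by blast
      then show ?case using sigma_sets.Compl[OF Compl.IH] by simp
    next
      case (Union F)
      have "?X \<inter> \<Union> (range F) = (\<Union>i. ?X \<inter> F i)" by blast
      then show ?case using sigma_sets.Union[of "\<lambda>i. ?X \<inter> F i", OF Union.IH] by simp
    qed
    then show "A \<in> sigma_sets ?X (cylinders ?X)" using B(2) by simp
  qed
qed

lemma space_invariant_prob: "invariant_prob X \<nu> \<Longrightarrow> space \<nu> = X"
  unfolding invariant_prob_def using sets_eq_imp_space_eq[of \<nu> "restrict_space borel X"]
  by (simp add: space_restrict_space)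

lemma measure_eqI_cylinders:
  fixes \<nu> \<mu> :: "(int \<Rightarrow> 'a::discrete_topology) measure"
  assumes "prob_space \<nu>" "sets \<nu> = sets (restrict_space borel (subshift a))"
    and "prob_space \<mu>" "sets \<mu> = sets (restrict_space borel (subshift a))"
    and "\<And>n w. emeasure \<nu> (cylinder (subshift a) n w) = emeasure \<mu> (cylinder (subshift a) n w)"
  shows "\<nu> = \<mu>"
proof (rule measure_eqI_generator_eq
    [where \<Omega> = "subshift a" and E = "cylinders (subshift a)" and A = "\<lambda>_. subshift a"])
  interpret \<nu>: prob_space \<nu> by fact
  interpret \<mu>: prob_space \<mu> by fact
  have space: "space \<nu> = subshift a" "space \<mu> = subshift a"
    using sets_eq_imp_space_eq[OF assms(2)] sets_eq_imp_space_eq[OF assms(4)]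
    by (simp_all add: space_restrict_space)
  show "Int_stable (cylinders (subshift a))" by (rule Int_stable_cylinders)
  show "cylinders (subshift a) \<subseteq> Pow (subshift a)" by (auto simp: cylinders_def cylinder_def)
  show "sets \<nu> = sigma_sets (subshift a) (cylinders (subshift a))"
    "sets \<mu> = sigma_sets (subshift a) (cylinders (subshift a))"
    using assms(2,4) by (simp_all add: sigma_sets_cylinders)
  show "range (\<lambda>_. subshift a) \<subseteq> cylinders (subshift a)" by (auto simp: cylinders_def)
  show "(\<Union>i::nat. subshift a) = subshift a" by simp
  show "emeasure \<nu> (subshift a) \<noteq> \<infinity>" using \<nu>.emeasure_space_1 space by simp
  fix C assume "C \<in> cylinders (subshift a)"
  then consider "C = subshift a" | "C = {}" | n w where "C = cylinder (subshift a) n w"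
    unfolding cylinders_def by auto
  then show "emeasure \<nu> C = emeasure \<mu> C"
    by cases (use \<nu>.emeasure_space_1 \<mu>.emeasure_space_1 space assms(5) in simp_all)
qed

lemma emeasure_funpow_shift_vimage:
  fixes \<nu> :: "(int \<Rightarrow> 'a::discrete_topology) measure"
  assumes \<nu>: "invariant_prob X \<nu>" and A: "A \<in> sets \<nu>"
  shows "emeasure \<nu> ((shift ^^ n) -` A \<inter> space \<nu>) = emeasure \<nu> A"
  using A
proof (induction n arbitrary: A)
  case 0
  then show ?case using sets.sets_into_space by (simp add: Int_absorb2)
next
  case (Suc n)
  have shift: "shift \<in> measurable \<nu> \<nu>" "distr \<nu> \<nu> shift = \<nu>"
    using \<nu> by (auto simp: invariant_prob_def)
  have "(shift ^^ n) \<in> measurable \<nu> \<nu>"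
    by (induction n) (auto intro: measurable_compose[OF _ shift(1)] simp: funpow_Suc_right)
  then have B: "(shift ^^ n) -` A \<inter> space \<nu> \<in> sets \<nu>"
    using Suc.prems by (rule measurable_sets)
  have "(shift ^^ Suc n) -` A \<inter> space \<nu> = shift -` ((shift ^^ n) -` A \<inter> space \<nu>) \<inter> space \<nu>"
    using measurable_space[OF shift(1)] by (auto simp del: funpow.simps simp: funpow_Suc_right)
  also have "emeasure \<nu> \<dots> = emeasure (distr \<nu> \<nu> shift) ((shift ^^ n) -` A \<inter> space \<nu>)"
    using emeasure_distr[OF shift(1) B] by simp
  also have "\<dots> = emeasure \<nu> A"
    using Suc.IH[OF Suc.prems] shift(2) by simp
  finally show ?case .
qed

lemma emeasure_shifted_window_set:
  fixes \<nu> :: "(int \<Rightarrow> 'a::discrete_topology) measure"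
  assumes \<nu>: "invariant_prob (subshift a) \<nu>"
  shows "emeasure \<nu> (subshift a \<inter> {x. P (window x (i + int j) L)}) = emeasure \<nu> (subshift a \<inter> {x. P (window x i L)})"
proof -
  have A: "subshift a \<inter> {x. P (window x i L)} \<in> sets \<nu>"
    using \<nu> window_set_in_sets unfolding invariant_prob_def by blast
  have "(shift ^^ j) -` (subshift a \<inter> {x. P (window x i L)}) \<inter> space \<nu> =
      subshift a \<inter> {x. P (window x (i + int j) L)}"
    using space_invariant_prob[OF \<nu>] by auto
  then show ?thesis using emeasure_funpow_shift_vimage[OF \<nu> A, of j] by simp
qed

lemma measure_shifted_window_set:
  fixes \<nu> :: "(int \<Rightarrow> 'a::discrete_topology) measure"
  assumes "invariant_prob (subshift a) \<nu>"
  shows "measure \<nu> (subshift a \<inter> {x. P (window x (i + int j) L)}) = measure \<nu> (subshift a \<inter> {x. P (window x i L)})"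
  using emeasure_shifted_window_set[OF assms] by (simp add: measure_def)

lemma integral_window_count:
  fixes \<nu> :: "(int \<Rightarrow> 'a::discrete_topology) measure" and N W :: nat and P :: "'a list \<Rightarrow> bool"
  assumes \<nu>: "invariant_prob (subshift a) \<nu>"
  defines "f \<equiv> \<lambda>x. real (card ({..<N} \<inter> {j. P (window x (int j) W)}))"
  shows "integrable \<nu> f" and "integral\<^sup>L \<nu> f = real N * measure \<nu> (subshift a \<inter> {x. P (window x 0 W)})"
proof -
  interpret prob_space \<nu> using \<nu> by (simp add: invariant_prob_def)
  have space: "space \<nu> = subshift a" by (rule space_invariant_prob[OF \<nu>])
  have sets: "subshift a \<inter> {x. P (window x i W)} \<in> sets \<nu>" for i
    using \<nu> window_set_in_sets unfolding invariant_prob_def by blast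
  define g where "g x = (\<Sum>j<N. indicator (subshift a \<inter> {x. P (window x (int j) W)}) x :: real)" for x
  have fg: "f x = g x" if "x \<in> space \<nu>" for x
    using that by (simp add: f_def g_def space indicator_def)
  have indicator: "integrable \<nu> (indicator (subshift a \<inter> {x. P (window x i W)}) :: _ \<Rightarrow> real)" for i
    using sets by (intro integrable_real_indicator) (auto simp: emeasure_eq_measure)
  then have "integrable \<nu> g"
    unfolding g_def by (intro Bochner_Integration.integrable_sum)
  moreover have "integrable \<nu> f \<longleftrightarrow> integrable \<nu> g"
    by (rule Bochner_Integration.integrable_cong[OF refl fg])
  ultimately show "integrable \<nu> f" by simp
  have "integral\<^sup>L \<nu> f = integral\<^sup>L \<nu> g" using fg by (intro Bochner_Integration.integral_cong) auto
  also have "\<dots> = (\<Sum>j<N. measure \<nu> (subshift a \<inter> {x. P (window x (int j) W)}))"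
    unfolding g_def using sets indicator by (subst Bochner_Integration.integral_sum) auto
  also have "\<dots> = real N * measure \<nu> (subshift a \<inter> {x. P (window x 0 W)})"
    using measure_shifted_window_set[OF \<nu>, of P 0] by simp
  finally show "integral\<^sup>L \<nu> f = real N * measure \<nu> (subshift a \<inter> {x. P (window x 0 W)})" .
qed

lemma measure_window_set_bounds:
  fixes \<nu> :: "(int \<Rightarrow> 'a::discrete_topology) measure"
  assumes \<nu>: "invariant_prob (subshift a) \<nu>" and N: "0 < N"
    and bounds: "AE x in \<nu>. real N * c \<le> real (card ({..<N} \<inter> {j. P (window x (int j) W)})) \<and>
                     real (card ({..<N} \<inter> {j. P (window x (int j) W)})) \<le> real N * d"
  shows "c \<le> measure \<nu> (subshift a \<inter> {x. P (window x 0 W)})"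
    and "measure \<nu> (subshift a \<inter> {x. P (window x 0 W)}) \<le> d"
proof -
  interpret prob_space \<nu> using \<nu> by (simp add: invariant_prob_def)
  let ?f = "\<lambda>x. real (card ({..<N} \<inter> {j. P (window x (int j) W)}))"
  let ?m = "measure \<nu> (subshift a \<inter> {x. P (window x 0 W)})"
  note f = integral_window_count[OF \<nu>, of N P W]
  have "AE x in \<nu>. real N * c \<le> ?f x" "AE x in \<nu>. ?f x \<le> real N * d"
    using bounds by (eventually_elim, simp)+
  then have "(\<integral>x. real N * c \<partial>\<nu>) \<le> integral\<^sup>L \<nu> ?f"
    using f(1) by (intro integral_mono_AE) simp_all
  moreover have "integral\<^sup>L \<nu> ?f \<le> (\<integral>x. real N * d \<partial>\<nu>)"
    using f(1) \<open>AE x in \<nu>. ?f x \<le> real N * d\<close> by (intro integral_mono_AE) simp_all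
  ultimately have "real N * c \<le> integral\<^sup>L \<nu> ?f" "integral\<^sup>L \<nu> ?f \<le> real N * d"
    by (simp_all add: prob_space)
  then show "c \<le> ?m" "?m \<le> d"
    using N f(2) by (simp_all add: mult_le_cancel_left_pos)
qed

lemma measure_word_near_frequency:
  fixes \<nu> :: "(int \<Rightarrow> 'a::discrete_topology) measure"
  assumes \<nu>: "invariant_prob (subshift a) \<nu>"
    and sub: "subshift b \<subseteq> subshift a" and full: "emeasure \<nu> (subshift b) = 1"
    and N: "0 < N" and freq: "\<And>p. \<bar>real (occurrences (\<lambda>t. b (p + t)) w N) / real N - c\<bar> \<le> e"
  shows "\<bar>measure \<nu> (subshift a \<inter> {x. window x 0 (length w) = w}) - c\<bar> \<le> e"
proof -
  interpret prob_space \<nu> using \<nu> by (simp add: invariant_prob_def)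
  let ?count = "\<lambda>x. real (card ({..<N} \<inter> {j. window x (int j) (length w) = w}))"
  have "subshift b \<in> sets \<nu>"
    using \<nu> sub subshift_in_sets[of "subshift a" b] by (auto simp: invariant_prob_def Int_absorb1)
  then have "AE x in \<nu>. x \<in> subshift b"
    using full by (simp add: AE_in_set_eq_1 emeasure_eq_measure)
  moreover have "real N * (c - e) \<le> ?count x \<and> ?count x \<le> real N * (c + e)" if x: "x \<in> subshift b" for x
  proof -
    obtain p where p: "\<And>j. j < N \<Longrightarrow> window x (int j) (length w) = nwindow b (p + j) (length w)"
      using subshift_windows_eq_nwindows[OF x N] by blast
    then have "{..<N} \<inter> {j. window x (int j) (length w) = w} = {j. j < N \<and> nwindow (\<lambda>t. b (p + t)) j (length w) = w}"
      by auto
    then have "?count x = real (occurrences (\<lambda>t. b (p + t)) w N)"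
      by (simp add: occurrences_def)
    moreover have "c - e \<le> real (occurrences (\<lambda>t. b (p + t)) w N) / real N"
      "real (occurrences (\<lambda>t. b (p + t)) w N) / real N \<le> c + e"
      using freq[of p] by (simp_all only: abs_le_iff) linarith+
    ultimately show ?thesis using N by (simp add: pos_le_divide_eq pos_divide_le_eq mult.commute)
  qed
  ultimately have "AE x in \<nu>. real N * (c - e) \<le> ?count x \<and> ?count x \<le> real N * (c + e)"
    by (auto elim: AE_mp)
  from measure_window_set_bounds[OF \<nu> N this] show ?thesis by linarith
qed

lemma invariant_prob_unique_on_primitive:
  fixes \<nu> \<mu> :: "(int \<Rightarrow> 'a::discrete_topology) measure"
  assumes b: "prim_prolong_automatic K b"
    and \<nu>: "invariant_prob (subshift a) \<nu>" and \<mu>: "invariant_prob (subshift a) \<mu>"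
    and sub: "subshift b \<subseteq> subshift a"
    and \<nu>_full: "emeasure \<nu> (subshift b) = 1" and \<mu>_full: "emeasure \<mu> (subshift b) = 1"
  shows "\<nu> = \<mu>"
proof -
  let ?X = "subshift a"
  have words: "measure \<nu> (?X \<inter> {x. window x 0 (length w) = w}) =
    measure \<mu> (?X \<inter> {x. window x 0 (length w) = w})" for w
  proof -
    let ?d = "measure \<nu> (?X \<inter> {x. window x 0 (length w) = w}) -
      measure \<mu> (?X \<inter> {x. window x 0 (length w) = w})"
    have "\<bar>?d\<bar> \<le> 0 + e" if "0 < e" for e
    proof -
      have "0 < e / 2" using that by simp
      then obtain N c where N: "0 < N"
        and freq: "\<forall>p. \<bar>real (occurrences (\<lambda>t. b (p + t)) w N) / real N - c\<bar> \<le> e / 2"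
        using prim_prolong_automatic_uniform_frequency[OF b] by blast
      then show ?thesis
        using measure_word_near_frequency[OF \<nu> sub \<nu>_full N freq[rule_format]]
          measure_word_near_frequency[OF \<mu> sub \<mu>_full N freq[rule_format]]
        by (simp only: abs_le_iff) linarith
    qed
    then show ?thesis using field_le_epsilon[of "\<bar>?d\<bar>" 0] by simp
  qed
  interpret \<nu>: prob_space \<nu> using \<nu> by (simp add: invariant_prob_def)
  interpret \<mu>: prob_space \<mu> using \<mu> by (simp add: invariant_prob_def)
  have "emeasure \<nu> (cylinder ?X n w) = emeasure \<mu> (cylinder ?X n w)" for n w
  proof (cases "length w = 2 * n + 1")
    case True
    then have "cylinder ?X n w = ?X \<inter> {x. window x (- int n) (length w) = w}"
      by (simp add: cylinder_def)
    then show ?thesis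
      using emeasure_shifted_window_set[OF \<nu>, of "\<lambda>v. v = w" "- int n" n "length w"]
        emeasure_shifted_window_set[OF \<mu>, of "\<lambda>v. v = w" "- int n" n "length w"] words[of w]
      by (simp add: \<nu>.emeasure_eq_measure \<mu>.emeasure_eq_measure)
  next
    case False
    then have "cylinder ?X n w = {}"
      by (auto simp: cylinder_def dest: arg_cong[of _ _ length])
    then show ?thesis by simp
  qed
  then show ?thesis
    using \<nu> \<mu> unfolding invariant_prob_def by (intro measure_eqI_cylinders) auto
qed

section \<open>Ergodic measures on the subshift of a\<close>

lemma upper_banach_density_zeroD:
  assumes "upper_banach_density M = 0" "0 < \<epsilon>"
  shows "\<exists>R0. \<forall>R\<ge>R0. \<forall>m. real (card (M \<inter> {m..<m + R})) \<le> \<epsilon> * real R"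
proof -
  have "limsup (\<lambda>R. ereal (SUP m. real (card (M \<inter> {m..<m + R})) / real R)) < ereal \<epsilon>"
    using assms unfolding upper_banach_density_def by simp
  then have "eventually (\<lambda>R. ereal (SUP m. real (card (M \<inter> {m..<m + R})) / real R) < ereal \<epsilon>) sequentially"
    by (rule Limsup_lessD)
  then obtain R0 where R0: "\<And>R. R \<ge> R0 \<Longrightarrow> (SUP m. real (card (M \<inter> {m..<m + R})) / real R) < \<epsilon>"
    unfolding eventually_sequentially by auto
  have "real (card (M \<inter> {m..<m + R})) \<le> \<epsilon> * real R" if "R \<ge> max R0 1" for R m
  proof -
    have bounded: "real (card (M \<inter> {m'..<m' + R})) / real R \<le> 1" for m'
    proof -
      have "card (M \<inter> {m'..<m' + R}) \<le> card {m'..<m' + R}" by (intro card_mono) auto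
      then show ?thesis using that by simp
    qed
    have "real (card (M \<inter> {m..<m + R})) / real R \<le> (SUP m. real (card (M \<inter> {m..<m + R})) / real R)"
      by (rule cSUP_upper) (auto intro!: bdd_aboveI bounded)
    moreover have "R0 \<le> R" "0 < R" using that by auto
    ultimately have "real (card (M \<inter> {m..<m + R})) / real R < \<epsilon>" using R0[of R] by linarith
    then show ?thesis using \<open>0 < R\<close> by (simp add: pos_divide_less_eq)
  qed
  then show ?thesis by blast
qed

lemma card_positions_by_blocks:
  fixes B R p :: nat
  assumes "0 < B"
  shows "card {j. j < (R - 1) * B \<and> P ((p + j) div B) ((p + j) mod B)}
    \<le> card (SIGMA m:{p div B..<p div B + R}. {r. r < B \<and> P m r})"
proof (rule card_inj_on_le)
  show "inj_on (\<lambda>j. ((p + j) div B, (p + j) mod B)) {j. j < (R - 1) * B \<and> P ((p + j) div B) ((p + j) mod B)}"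
  proof (rule inj_onI)
    fix x y assume "((p + x) div B, (p + x) mod B) = ((p + y) div B, (p + y) mod B)"
    then have "(p + x) div B * B + (p + x) mod B = (p + y) div B * B + (p + y) mod B" by simp
    then show "x = y" by simp
  qed
  have "p div B \<le> (p + j) div B \<and> (p + j) div B < p div B + R" if "j < (R - 1) * B" for j
  proof
    show "p div B \<le> (p + j) div B" by (intro div_le_mono) simp
    have "(p + j) div B \<le> (p + (R - 1) * B) div B" using that by (intro div_le_mono) simp
    also have "\<dots> = p div B + (R - 1)" using assms by simp
    finally show "(p + j) div B < p div B + R" using that by (cases R) auto
  qed
  then show "(\<lambda>j. ((p + j) div B, (p + j) mod B)) ` {j. j < (R - 1) * B \<and> P ((p + j) div B) ((p + j) mod B)}
    \<subseteq> (SIGMA m:{p div B..<p div B + R}. {r. r < B \<and> P m r})"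
    using assms by auto
qed simp

lemma nwindow_in_lang_of_agree:
  assumes "\<And>t. t < W \<Longrightarrow> a (n + t) = b (n + t)" "1 \<le> W"
  shows "nwindow a n W \<in> lang b"
proof -
  have "nwindow a n W = nwindow b n W"
    using assms(1) by (intro nth_equalityI) auto
  then show ?thesis using assms(2) by (auto simp: lang_eq_nwindows)
qed

lemma windows_mostly_in_components:
  fixes a :: "nat \<Rightarrow> 'a" and b :: "nat \<Rightarrow> nat \<Rightarrow> 'a" and M :: "nat \<Rightarrow> nat set"
  assumes k: "2 \<le> k"
    and M: "\<forall>i\<in>{1..s}. M i = {m. \<forall>lam::nat. \<forall>r<k ^ lam. a (m * k ^ lam + r) = b i (m * k ^ lam + r)}"
    and density: "upper_banach_density (UNIV - (\<Union>i\<in>{1..s}. M i)) = 0"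
    and W: "1 \<le> W"
  shows "\<exists>N>0. \<forall>p. N \<le> 2 * card ({..<N} \<inter> {j. \<exists>i\<in>{1..s}. nwindow a (p + j) W \<in> lang (b i)})"
proof -
  \<comment> \<open>Blocks of length \<open>B = k ^ (8 * W)\<close>, stretches of \<open>R - 1\<close> blocks: at most an eighth
     of the blocks have their index in \<open>M0\<close>, and at most a fraction \<open>W / B \<le> 1 / 8\<close> of the
     positions is too close to the end of its block.\<close>
  define M0 where "M0 = UNIV - (\<Union>i\<in>{1..s}. M i)"
  obtain R0 where R0: "\<And>R m. R \<ge> R0 \<Longrightarrow> real (card (M0 \<inter> {m..<m + R})) \<le> 1 / 8 * real R"
    using upper_banach_density_zeroD[OF density[folded M0_def], of "1 / 8"] by auto
  define R where "R = max R0 2"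
  have "2 \<le> R" by (simp add: R_def)
  have sparse: "8 * card (M0 \<inter> {m..<m + R}) \<le> R" for m
    using R0[of R m] by (simp add: R_def)
  define B where "B = k ^ (8 * W)"
  have "8 * W < 2 ^ (8 * W)" by (rule less_exp)
  also have "\<dots> \<le> B" unfolding B_def using k by (simp add: power_mono)
  finally have B: "8 * W \<le> B" "0 < B" using W by simp_all
  define N where "N = (R - 1) * B"
  have "N \<le> 2 * card ({..<N} \<inter> {j. \<exists>i\<in>{1..s}. nwindow a (p + j) W \<in> lang (b i)})" for p
  proof -
    define G where "G = {..<N} \<inter> {j. \<exists>i\<in>{1..s}. nwindow a (p + j) W \<in> lang (b i)}"
    define Bad1 where "Bad1 = {j. j < N \<and> (p + j) div B \<in> M0}"
    define Bad2 where "Bad2 = {j. j < N \<and> B < (p + j) mod B + W}"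
    have "{..<N} \<subseteq> G \<union> Bad1 \<union> Bad2"
    proof
      fix j assume j: "j \<in> {..<N}"
      show "j \<in> G \<union> Bad1 \<union> Bad2"
      proof (cases "(p + j) div B \<in> M0 \<or> B < (p + j) mod B + W")
        case False
        then obtain i where i: "i \<in> {1..s}" "(p + j) div B \<in> M i" by (auto simp: M0_def)
        have agree: "a (m * B + r) = b i (m * B + r)" if "m \<in> M i" "r < B" for m r
          using M i that unfolding B_def by blast
        have "a (p + j + t) = b i (p + j + t)" if "t < W" for t
        proof -
          have eq: "p + j + t = (p + j) div B * B + ((p + j) mod B + t)"
            using div_mult_mod_eq[of "p + j" B] by linarith
          have "(p + j) mod B + t < B" using False that by simp
          from agree[OF i(2) this] show ?thesis unfolding eq .
        qed
        then have "nwindow a (p + j) W \<in> lang (b i)"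
          by (rule nwindow_in_lang_of_agree[OF _ W])
        then show ?thesis using i j by (auto simp: G_def)
      qed (use j in \<open>auto simp: Bad1_def Bad2_def\<close>)
    qed
    then have "N \<le> card G + card Bad1 + card Bad2"
      using card_mono[of "G \<union> Bad1 \<union> Bad2" "{..<N}"] card_Un3_le[of G Bad1 Bad2]
      by (simp add: G_def Bad1_def Bad2_def)
    moreover have "card Bad1 \<le> card (M0 \<inter> {p div B..<p div B + R}) * B"
    proof -
      have "(SIGMA m:{p div B..<p div B + R}. {r. r < B \<and> m \<in> M0}) = (M0 \<inter> {p div B..<p div B + R}) \<times> {..<B}"
        by auto
      then show ?thesis
        using card_positions_by_blocks[OF B(2), where R = R and p = p and P = "\<lambda>m r. m \<in> M0"]
        by (simp add: Bad1_def N_def card_cartesian_product)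
    qed
    moreover have "card Bad2 \<le> R * W"
    proof -
      have "card {r. r < B \<and> B < r + W} \<le> card {B - W..<B}" by (intro card_mono) auto
      then have "card {r. r < B \<and> B < r + W} \<le> W" by simp
      have "card Bad2 \<le> R * card {r. r < B \<and> B < r + W}"
        using card_positions_by_blocks[OF B(2), where R = R and p = p and P = "\<lambda>m r. B < r + W"]
        by (simp add: Bad2_def N_def card_cartesian_product)
      also have "\<dots> \<le> R * W" using \<open>card {r. r < B \<and> B < r + W} \<le> W\<close> by simp
      finally show ?thesis .
    qed
    moreover have "8 * (card (M0 \<inter> {p div B..<p div B + R}) * B) \<le> R * B"
      using sparse[of "p div B"] by simp
    moreover have "8 * (R * W) \<le> R * B" using B(1) by simp
    moreover have "N + B = R * B" "2 * B \<le> R * B"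
      using \<open>2 \<le> R\<close> by (cases R, simp_all add: N_def)
    ultimately show ?thesis unfolding G_def by linarith
  qed
  moreover have "0 < N" using B by (simp add: N_def R_def)
  ultimately show ?thesis by blast
qed

lemma tendsto_measure_centered_windows_in_lang:
  fixes \<nu> :: "(int \<Rightarrow> 'a::discrete_topology) measure"
  assumes \<nu>: "invariant_prob (subshift a) \<nu>" and sub: "subshift b \<subseteq> subshift a"
  shows "(\<lambda>L. measure \<nu> (subshift a \<inter> {x. window x (- int L) (2 * L + 1) \<in> lang b})) \<longlonglongrightarrow> measure \<nu> (subshift b)"
proof -
  interpret prob_space \<nu> using \<nu> by (simp add: invariant_prob_def)
  define E where "E L = subshift a \<inter> {x. window x (- int L) (2 * L + 1) \<in> lang b}" for L
  have "E L \<in> sets \<nu>" for L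
    using \<nu> window_set_in_sets by (auto simp: invariant_prob_def E_def)
  moreover have "decseq E"
  proof (rule decseq_SucI)
    show "E (Suc L) \<subseteq> E L" for L
    proof
      fix x assume "x \<in> E (Suc L)"
      then have x: "x \<in> subshift a" "window x (- int (Suc L)) (2 * Suc L + 1) \<in> lang b"
        by (auto simp: E_def)
      have "window x (- int L) (2 * L + 1) = take (2 * L + 1) (drop 1 (window x (- int (Suc L)) (2 * Suc L + 1)))"
        using window_eq_take_drop[of 1 "2 * L + 1" "2 * Suc L + 1" x "- int (Suc L)"] by simp
      also have "\<dots> \<in> lang b"
        using x(2) by (rule take_drop_in_lang) auto
      finally show "x \<in> E L" using x(1) by (simp add: E_def)
    qed
  qed
  moreover have "(\<Inter>L. E L) = subshift b"
    using sub subshift_iff_centered_windows[of _ b] by (auto simp: E_def)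
  ultimately show ?thesis
    unfolding E_def[symmetric] by (metis finite_Lim_measure_decseq image_subset_iff)
qed

lemma invariant_prob_charges_some_component:
  fixes \<nu> :: "(int \<Rightarrow> 'a::discrete_topology) measure" and b :: "nat \<Rightarrow> nat \<Rightarrow> 'a"
  assumes \<nu>: "invariant_prob (subshift a) \<nu>"
    and sub: "\<And>i. i \<in> {1..s} \<Longrightarrow> subshift (b i) \<subseteq> subshift a"
    and windows: "\<And>W. 1 \<le> W \<Longrightarrow>
      \<exists>N>0. \<forall>p. N \<le> 2 * card ({..<N} \<inter> {j. \<exists>i\<in>{1..s}. nwindow a (p + j) W \<in> lang (b i)})"
  shows "\<exists>i\<in>{1..s}. emeasure \<nu> (subshift (b i)) \<noteq> 0"
proof (rule ccontr)
  assume "\<not> ?thesis"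
  then have null: "measure \<nu> (subshift (b i)) = 0" if "i \<in> {1..s}" for i
    using that by (simp add: measure_def)
  interpret prob_space \<nu> using \<nu> by (simp add: invariant_prob_def)
  define E where "E i L = subshift a \<inter> {x. window x (- int L) (2 * L + 1) \<in> lang (b i)}" for i L
  define \<epsilon> where "\<epsilon> = 1 / (2 * real s + 1)"
  have "\<forall>\<^sub>F L in sequentially. measure \<nu> (E i L) < \<epsilon>" if "i \<in> {1..s}" for i
  proof -
    have "(\<lambda>L. measure \<nu> (E i L)) \<longlonglongrightarrow> 0"
      using tendsto_measure_centered_windows_in_lang[OF \<nu>, of "b i"] sub null[OF that] that
      unfolding E_def by simp
    moreover have "0 < \<epsilon>" by (simp add: \<epsilon>_def)
    ultimately show ?thesis by (rule order_tendstoD(2))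
  qed
  then have "\<forall>\<^sub>F L in sequentially. \<forall>i\<in>{1..s}. measure \<nu> (E i L) < \<epsilon>"
    by (simp add: eventually_ball_finite)
  then obtain L where "\<forall>n\<ge>L. \<forall>i\<in>{1..s}. measure \<nu> (E i n) < \<epsilon>"
    unfolding eventually_sequentially by blast
  then have L: "\<And>i. i \<in> {1..s} \<Longrightarrow> measure \<nu> (E i L) < \<epsilon>"
    using le_refl by blast
  define P where "P v \<longleftrightarrow> (\<exists>i\<in>{1..s}. v \<in> lang (b i))" for v
  define W where "W = 2 * L + 1"
  have "measure \<nu> (subshift a \<inter> {x. P (window x (- int L) W)}) \<le> (\<Sum>i\<in>{1..s}. measure \<nu> (E i L))"
  proof -
    have "subshift a \<inter> {x. P (window x (- int L) W)} = (\<Union>i\<in>{1..s}. E i L)"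
      by (auto simp: E_def P_def W_def)
    moreover have "E i L \<in> sets \<nu>" for i
      using \<nu> window_set_in_sets by (auto simp: invariant_prob_def E_def)
    ultimately show ?thesis by (simp add: measure_UNION_le)
  qed
  also have "\<dots> \<le> real s * \<epsilon>"
    using sum_mono[of "{1..s}" "\<lambda>i. measure \<nu> (E i L)" "\<lambda>_. \<epsilon>"] L by fastforce
  also have "\<dots> < 1 / 2" by (simp add: \<epsilon>_def field_simps)
  finally have small: "measure \<nu> (subshift a \<inter> {x. P (window x 0 W)}) < 1 / 2"
    using measure_shifted_window_set[OF \<nu>, of P "- int L" L W] by simp
  obtain N where N: "0 < N"
    and many: "\<And>p. N \<le> 2 * card ({..<N} \<inter> {j. \<exists>i\<in>{1..s}. nwindow a (p + j) W \<in> lang (b i)})"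
    using windows[of W] by (auto simp: W_def)
  have "real N * (1 / 2) \<le> real (card ({..<N} \<inter> {j. P (window x (int j) W)})) \<and>
      real (card ({..<N} \<inter> {j. P (window x (int j) W)})) \<le> real N * 1" if x: "x \<in> space \<nu>" for x
  proof -
    have "x \<in> subshift a" using x space_invariant_prob[OF \<nu>] by simp
    then obtain p where p: "\<And>j. j < N \<Longrightarrow> window x (int j) W = nwindow a (p + j) W"
      using subshift_windows_eq_nwindows N by blast
    then have "{..<N} \<inter> {j. P (window x (int j) W)} = {..<N} \<inter> {j. \<exists>i\<in>{1..s}. nwindow a (p + j) W \<in> lang (b i)}"
      by (auto simp: P_def)
    moreover have "card ({..<N} \<inter> {j. P (window x (int j) W)}) \<le> N"
      using card_mono[of "{..<N}"] by simp
    ultimately show ?thesis using many[of p] by simp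
  qed
  then have "1 / 2 \<le> measure \<nu> (subshift a \<inter> {x. P (window x 0 W)})"
    by (rule measure_window_set_bounds(1)[OF \<nu> N AE_I2])
  with small show False by simp
qed

lemma subset_space_of_emeasure_nonzero:
  "invariant_prob X \<mu> \<Longrightarrow> emeasure \<mu> A \<noteq> 0 \<Longrightarrow> A \<subseteq> X"
  using emeasure_notin_sets[of A \<mu>] sets.sets_into_space[of A \<mu>] space_invariant_prob by blast

lemma ergodic_emeasure_subshift_eq_1:
  fixes \<nu> :: "(int \<Rightarrow> 'a::discrete_topology) measure"
  assumes erg: "ergodic_prob (subshift a) \<nu>" and sub: "subshift b \<subseteq> subshift a"
    and "emeasure \<nu> (subshift b) \<noteq> 0"
  shows "emeasure \<nu> (subshift b) = 1"
proof -
  have \<nu>: "invariant_prob (subshift a) \<nu>" using erg by (simp add: ergodic_prob_def)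
  have "subshift b \<in> sets \<nu>"
    using \<nu> sub subshift_in_sets[of "subshift a" b] by (auto simp: invariant_prob_def Int_absorb1)
  moreover have "shift -` subshift b \<inter> space \<nu> = subshift b"
    using sub space_invariant_prob[OF \<nu>] by auto
  ultimately show ?thesis using erg assms(3) by (auto simp: ergodic_prob_def)
qed

theorem propositionA5:
  fixes k s :: nat
    and a :: "nat \<Rightarrow> 'a::discrete_topology"
    and b :: "nat \<Rightarrow> nat \<Rightarrow> 'a"
    and M :: "nat \<Rightarrow> nat set"
    and \<mu> :: "nat \<Rightarrow> (int \<Rightarrow> 'a) measure"
    and \<nu> :: "(int \<Rightarrow> 'a) measure"
  assumes a_aut: "automatic k a"
    and b_pp: "\<forall>i\<in>{1..s}. \<exists>l\<ge>1. prim_prolong_automatic (k ^ l) (b i)"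
    and M_def: "\<forall>i\<in>{1..s}. M i =
        {m. \<forall>lam::nat. \<forall>r<k ^ lam. a (m * k ^ lam + r) = b i (m * k ^ lam + r)}"
    and M_disj: "\<forall>i\<in>{1..s}. \<forall>j\<in>{1..s}. i \<noteq> j \<longrightarrow> M i \<inter> M j = {}"
    and M_pos: "\<forall>i\<in>{1..s}. \<exists>d>0. has_log_density (M i) d"
    and M0: "upper_banach_density (UNIV - (\<Union>i\<in>{1..s}. M i)) = 0"
    and \<mu>_inv: "\<forall>i\<in>{1..s}. invariant_prob (subshift a) (\<mu> i)"
    and \<mu>_supp: "\<forall>i\<in>{1..s}. emeasure (\<mu> i) (subshift (b i)) = 1"
    and \<nu>_erg: "ergodic_prob (subshift a) \<nu>"
  shows "\<exists>i\<in>{1..s}. \<nu> = \<mu> i"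
proof -
  have \<nu>: "invariant_prob (subshift a) \<nu>" using \<nu>_erg by (simp add: ergodic_prob_def)
  have sub: "subshift (b i) \<subseteq> subshift a" if "i \<in> {1..s}" for i
    using \<mu>_inv \<mu>_supp that by (intro subset_space_of_emeasure_nonzero[of _ "\<mu> i"]) auto
  have "2 \<le> k" using a_aut by (auto simp: automatic_def is_DFAO_def)
  from invariant_prob_charges_some_component[OF \<nu> sub windows_mostly_in_components[OF this M_def M0]]
  obtain i where i: "i \<in> {1..s}" and "emeasure \<nu> (subshift (b i)) \<noteq> 0" by blast
  then have "emeasure \<nu> (subshift (b i)) = 1"
    using ergodic_emeasure_subshift_eq_1[OF \<nu>_erg] sub by blast
  moreover obtain l where "prim_prolong_automatic (k ^ l) (b i)" using b_pp i by blast
  ultimately have "\<nu> = \<mu> i"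
    using invariant_prob_unique_on_primitive \<nu> \<mu>_inv \<mu>_supp sub i by blast
  with i show ?thesis by blast
qed

end
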